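(* Let $G$ be a locally compact Polish group with identity element $\mathbf 1$, and let $\bar{\mathbf 1}$ denote the identity of $G^\omega$. There exists a compact set $K_0\subseteq G^\omega$ with $\bar{\mathbf 1}\in K_0$ such that for each compact $K\subseteq G^\omega$ with $\bar{\mathbf 1}\in K$, there is a continuous group homomorphism $\varphi:G^\omega\to G^\omega$ such that for every group word $w$, $\varphi^{-1}(w[K_0])=w[K]$. In particular, $\langle K_0\rangle$ is a universal compactly generated subgroup of $G^\omega$, i.e., for every compact $K\subseteq G^\omega$ there is a continuous homomorphism $\psi:G^\omega\to G^\omega$ with $\psi^{-1}(\langle K_0\rangle)=\langle K\rangle$.
   Context: $G^\omega$ has the product topology. An $m$-ary group word $w$ is a formal expression combining $m$ symbols using multiplication and inverses (e.g. $b^{-1}ac^{-1}$); it induces a continuous map $G^m\to G$ (and likewise on $G^\omega$). For $A\subseteq G^\omega$, $w[A]=\{w(x_1,\ldots,x_m):x_1,\ldots,x_m\in A\}$, and $\langle A\rangle$ is the subgroup generated by $A$. *)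

theory Defs
  imports "HOL-Analysis.Analysis" "HOL-Library.Function_Algebras"
begin

text \<open>Groups are written additively (Isabelle's group_add, not assumed commutative):
  product = +, inverse = uminus, identity = 0.  G^omega is the type nat => 'a with the
  pointwise group structure (Function_Algebras) and the product topology (Function_Topology).\<close>

text \<open>Group words in the variables 0,1,2,... built from variables by multiplication
  and inversion.  A word uses finitely many variables, so it is an m-ary word for some m.\<close>
datatype gword = GVar nat | GMul gword gword | GInv gword

primrec wval :: "gword \<Rightarrow> (nat \<Rightarrow> 'g::group_add) \<Rightarrow> 'g" where
  "wval (GVar i) x = x i"
| "wval (GMul u v) x = wval u x + wval v x"
| "wval (GInv u) x = - wval u x"

definition word_image :: "gword \<Rightarrow> 'g::group_add set \<Rightarrow> 'g set" where
  "word_image w A = {wval w x | x. \<forall>i. x i \<in> A}"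

definition is_subgroup :: "'g::group_add set \<Rightarrow> bool" where
  "is_subgroup H \<longleftrightarrow> 0 \<in> H \<and> (\<forall>x\<in>H. \<forall>y\<in>H. x + y \<in> H) \<and> (\<forall>x\<in>H. - x \<in> H)"

definition gen_subgroup :: "'g::group_add set \<Rightarrow> 'g set" where
  "gen_subgroup A = \<Inter>{H. A \<subseteq> H \<and> is_subgroup H}"

definition group_hom :: "('g::group_add \<Rightarrow> 'h::group_add) \<Rightarrow> bool" where
  "group_hom f \<longleftrightarrow> (\<forall>x y. f (x + y) = f x + f y)"

end

theory Submission
  imports Defs
begin

text \<open>Choose a countable family of compact subsets of \<open>G\<^sup>\<omega>\<close>, each supported on finitely many
  coordinates and closed under finite intersections, fine enough that every compact \<open>L\<close>
  supported on the first \<open>n\<close> coordinates is the intersection of the members containing it.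
  Enumerate all pairs \<open>(n\<^sub>r, B\<^sub>r)\<close> of a number and a member containing \<open>0\<close>, and let \<open>K\<^sub>0\<close> be
  the product of the \<open>B\<^sub>r\<close>, placed in \<open>G\<^sup>\<omega>\<close> by a pairing of indices.  For a compact \<open>K\<close>, the
  \<open>r\<close>-th block of \<open>\<phi> x\<close> is the truncation of \<open>x\<close> to \<open>n\<^sub>r\<close> coordinates if that truncation of \<open>K\<close>
  lies in \<open>B\<^sub>r\<close>, and \<open>0\<close> otherwise.  Then \<open>\<phi> x \<in> w[K\<^sub>0]\<close> says that each truncation of \<open>x\<close>
  lies in \<open>w[B]\<close> for every member \<open>B\<close> containing the corresponding truncation of \<open>K\<close>.  Word
  images commute with intersections of directed families of compact sets, so each truncation
  of \<open>x\<close> lies in the word image of the truncation of \<open>K\<close>; as \<open>w[K]\<close> is compact, hence closed,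
  \<open>x \<in> w[K]\<close>.  Generated subgroups follow since \<open>\<langle>A\<rangle>\<close> is the union of all \<open>w[A]\<close> when \<open>0 \<in> A\<close>.\<close>

section \<open>Product topology\<close>

lemma tendsto_fun_iff:
  fixes f :: "'b \<Rightarrow> 'i \<Rightarrow> 'a::topological_space"
  shows "(f \<longlongrightarrow> l) F \<longleftrightarrow> (\<forall>i. ((\<lambda>x. f x i) \<longlongrightarrow> l i) F)"
  using limitin_componentwise[of "\<lambda>i. euclidean" UNIV f l F]
  by (simp add: euclidean_product_topology)

instance "fun" :: (type, topological_group_add) topological_group_add
proof
  fix a b :: "'a \<Rightarrow> 'b"
  have "(fst \<longlongrightarrow> a) (nhds a \<times>\<^sub>F nhds b)" "(snd \<longlongrightarrow> b) (nhds a \<times>\<^sub>F nhds b)"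
    by (simp_all add: filterlim_def filtermap_fst_prod_filter filtermap_snd_prod_filter)
  then have "((\<lambda>x. fst x i + snd x i) \<longlongrightarrow> a i + b i) (nhds a \<times>\<^sub>F nhds b)" for i
    by (intro tendsto_add) (simp_all add: tendsto_fun_iff)
  then show "((\<lambda>x. fst x + snd x) \<longlongrightarrow> a + b) (nhds a \<times>\<^sub>F nhds b)"
    by (simp add: tendsto_fun_iff)
  have "((\<lambda>x. - x i) \<longlongrightarrow> - a i) (nhds a)" for i
    using filterlim_ident[of "nhds a"] by (intro tendsto_minus) (simp add: tendsto_fun_iff)
  then show "(uminus \<longlongrightarrow> - a) (nhds a)"
    by (simp add: tendsto_fun_iff)
qed

lemma compact_Pi_UNIV:
  fixes S :: "'i \<Rightarrow> 'b::topological_space set"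
  assumes "\<And>i. compact (S i)"
  shows "compact {y. \<forall>i. y i \<in> S i}"
proof -
  have "{y. \<forall>i. y i \<in> S i} = PiE UNIV S" by (auto simp: PiE_UNIV_domain)
  moreover have "compactin (product_topology (\<lambda>i. euclidean) UNIV) (PiE UNIV S)"
    using assms by (simp add: compactin_PiE)
  ultimately show ?thesis by (simp add: euclidean_product_topology)
qed

lemma closed_Pi_UNIV:
  fixes S :: "'i \<Rightarrow> 'b::topological_space set"
  assumes "\<And>i. closed (S i)"
  shows "closed {y. \<forall>i. y i \<in> S i}"
proof -
  have "closed ((\<lambda>y. y i) -` S i)" for i
    by (rule closed_vimage[OF assms]) (simp add: continuous_on_eq_continuous_at[symmetric])
  then show ?thesis by (simp add: closed_Collect_all vimage_def)
qed

section \<open>Group words\<close>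

lemma group_hom_zero: "group_hom h \<Longrightarrow> h 0 = 0"
  unfolding group_hom_def by (metis add.right_neutral add_left_cancel)

lemma group_hom_minus:
  assumes "group_hom h" shows "h (- x) = - h x"
proof -
  have "h x + h (- x) = 0"
    using assms group_hom_zero[OF assms] unfolding group_hom_def by (metis add.right_inverse)
  then show ?thesis by (rule minus_unique[symmetric])
qed

lemma group_hom_comp: "group_hom f \<Longrightarrow> group_hom g \<Longrightarrow> group_hom (f \<circ> g)"
  unfolding group_hom_def by simp

lemma wval_group_hom: "group_hom h \<Longrightarrow> h (wval w a) = wval w (\<lambda>i. h (a i))"
  by (induction w) (simp_all add: group_hom_def group_hom_minus)

lemma wval_apply: "wval w a j = wval w (\<lambda>i. a i j)"
  by (induction w) auto

lemma wval_zero: "wval w (\<lambda>_. 0) = 0"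
  by (induction w) simp_all

lemma word_imageI: "(\<And>i. a i \<in> A) \<Longrightarrow> wval w a \<in> word_image w A"
  unfolding word_image_def by blast

lemma word_imageE:
  assumes "z \<in> word_image w A"
  obtains a where "z = wval w a" "\<And>i. a i \<in> A"
  using assms unfolding word_image_def by blast

lemma word_image_eq_image: "word_image w A = wval w ` {a. \<forall>i. a i \<in> A}"
  unfolding word_image_def by blast

lemma word_image_mono: "A \<subseteq> B \<Longrightarrow> word_image w A \<subseteq> word_image w B"
  unfolding word_image_def by blast

lemma zero_in_word_image: "0 \<in> A \<Longrightarrow> 0 \<in> word_image w A"
  using word_imageI[of "\<lambda>_. 0" A w] by (simp add: wval_zero)

lemma word_image_group_hom:
  assumes "group_hom h"
  shows "word_image w (h ` A) = h ` word_image w A"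
proof
  show "h ` word_image w A \<subseteq> word_image w (h ` A)"
    by (auto simp: word_image_def wval_group_hom[OF assms])
  show "word_image w (h ` A) \<subseteq> h ` word_image w A"
  proof
    fix z assume "z \<in> word_image w (h ` A)"
    then obtain b where z: "z = wval w b" and b: "\<And>i. b i \<in> h ` A" by (blast elim: word_imageE)
    then have "\<forall>i. \<exists>x. x \<in> A \<and> b i = h x" by blast
    then obtain a where a: "\<And>i. a i \<in> A" "\<And>i. b i = h (a i)" by metis
    have "b = (\<lambda>i. h (a i))" using a(2) by blast
    then have "z = h (wval w a)" by (simp add: z wval_group_hom[OF assms])
    then show "z \<in> h ` word_image w A" using a(1) by (simp add: word_imageI)
  qed
qed

lemma word_image_Pi: "word_image w {b. \<forall>r. b r \<in> A r} = {y. \<forall>r. y r \<in> word_image w (A r)}"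
proof (intro equalityI subsetI CollectI allI)
  fix y r assume "y \<in> word_image w {b. \<forall>r. b r \<in> A r}"
  then obtain a where "y = wval w a" "\<And>i. a i \<in> {b. \<forall>r. b r \<in> A r}" by (blast elim: word_imageE)
  then have "y r = wval w (\<lambda>i. a i r)" "\<And>i. a i r \<in> A r" by (simp_all add: wval_apply)
  then show "y r \<in> word_image w (A r)" by (simp add: word_imageI)
next
  fix y assume "y \<in> {y. \<forall>r. y r \<in> word_image w (A r)}"
  then have "\<forall>r. \<exists>a. y r = wval w a \<and> (\<forall>i. a i \<in> A r)" unfolding word_image_def by blast
  then obtain a where a: "\<And>r. y r = wval w (a r)" "\<And>r i. a r i \<in> A r" by metis
  have "y = wval w (\<lambda>i r. a r i)"
  proof
    fix r show "y r = wval w (\<lambda>i r. a r i) r" by (simp add: a(1) wval_apply[of w "\<lambda>i r. a r i"])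
  qed
  moreover have "(\<lambda>r. a r i) \<in> {b. \<forall>r. b r \<in> A r}" for i using a(2) by simp
  ultimately show "y \<in> word_image w {b. \<forall>r. b r \<in> A r}" by (simp add: word_imageI)
qed

lemma continuous_on_wval: "continuous_on UNIV (wval w :: (nat \<Rightarrow> 'g::topological_group_add) \<Rightarrow> 'g)"
  by (induction w) (auto intro: continuous_on_add continuous_on_minus)

lemma compact_word_image: "compact K \<Longrightarrow> compact (word_image w (K :: 'g::topological_group_add set))"
  unfolding word_image_eq_image
  by (intro compact_continuous_image continuous_on_subset[OF continuous_on_wval] compact_Pi_UNIV) auto

lemma Inter_insert_mem_if_Int_closed:
  assumes "finite F" "F \<subseteq> \<S>" "B \<in> \<S>" "\<And>B C. B \<in> \<S> \<Longrightarrow> C \<in> \<S> \<Longrightarrow> B \<inter> C \<in> \<S>"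
  shows "\<Inter>(insert B F) \<in> \<S>"
  using assms(1,2) by (induction F) (use assms(3,4) in \<open>auto simp: Int_left_commute\<close>)

lemma word_image_Inter_compact:
  fixes \<S> :: "'g::{topological_group_add, t2_space} set set"
  assumes "\<S> \<noteq> {}" and compact: "\<And>B. B \<in> \<S> \<Longrightarrow> compact B"
    and Int: "\<And>B C. B \<in> \<S> \<Longrightarrow> C \<in> \<S> \<Longrightarrow> B \<inter> C \<in> \<S>"
  shows "word_image w (\<Inter>\<S>) = (\<Inter>B\<in>\<S>. word_image w B)"
proof
  show "word_image w (\<Inter>\<S>) \<subseteq> (\<Inter>B\<in>\<S>. word_image w B)"
    unfolding word_image_def by blast
  show "(\<Inter>B\<in>\<S>. word_image w B) \<subseteq> word_image w (\<Inter>\<S>)"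
  proof
    fix y assume y: "y \<in> (\<Inter>B\<in>\<S>. word_image w B)"
    obtain B0 where B0: "B0 \<in> \<S>" using assms(1) by blast
    define sols where "sols B = {a. (\<forall>i. a i \<in> B) \<and> wval w a = y}" for B
    have "closed (sols B)" if "B \<in> \<S>" for B
    proof -
      have "sols B = {a. \<forall>i. a i \<in> B} \<inter> wval w -` {y}" by (auto simp: sols_def)
      moreover have "closed {a. \<forall>i. a i \<in> B}"
        using compact[OF that] by (simp add: closed_Pi_UNIV compact_imp_closed)
      moreover have "closed (wval w -` {y})"
        by (rule closed_vimage[OF closed_singleton continuous_on_wval])
      ultimately show ?thesis by (metis closed_Int)
    qed
    moreover have "{a. \<forall>i. a i \<in> B0} \<inter> (\<Inter>B\<in>F. sols B) \<noteq> {}" if "finite F" "F \<subseteq> \<S>" for F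
    proof -
      have "y \<in> word_image w (\<Inter>(insert B0 F))"
        using y Inter_insert_mem_if_Int_closed[OF that B0 Int] by blast
      then obtain a where "y = wval w a" "\<And>i. a i \<in> \<Inter>(insert B0 F)" by (blast elim: word_imageE)
      then have "a \<in> {a. \<forall>i. a i \<in> B0} \<inter> (\<Inter>B\<in>F. sols B)" by (auto simp: sols_def)
      then show ?thesis by blast
    qed
    ultimately have "{a. \<forall>i. a i \<in> B0} \<inter> (\<Inter>B\<in>\<S>. sols B) \<noteq> {}"
      using compact_imp_fip_image[OF compact_Pi_UNIV[OF compact[OF B0]]] by blast
    then obtain a where "\<And>B. B \<in> \<S> \<Longrightarrow> a \<in> sols B" by blast
    then have "y = wval w a" "\<And>i. a i \<in> \<Inter>\<S>" using B0 unfolding sols_def by blast+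
    then show "y \<in> word_image w (\<Inter>\<S>)" by (simp add: word_imageI)
  qed
qed

section \<open>Generated subgroups\<close>

primrec wren :: "(nat \<Rightarrow> nat) \<Rightarrow> gword \<Rightarrow> gword" where
  "wren f (GVar i) = GVar (f i)"
| "wren f (GMul u v) = GMul (wren f u) (wren f v)"
| "wren f (GInv u) = GInv (wren f u)"

lemma wval_wren: "wval (wren f w) a = wval w (\<lambda>i. a (f i))"
  by (induction w) auto

lemma is_subgroup_word_images:
  assumes "0 \<in> A"
  shows "is_subgroup (\<Union>w. word_image w A)"
  unfolding is_subgroup_def
proof (intro conjI ballI)
  show "0 \<in> (\<Union>w. word_image w A)" using zero_in_word_image[OF assms] by blast
next
  fix x y assume "x \<in> (\<Union>w. word_image w A)" "y \<in> (\<Union>w. word_image w A)"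
  then obtain u v where "x \<in> word_image u A" "y \<in> word_image v A" by blast
  obtain a where x: "x = wval u a" "\<And>i. a i \<in> A" using \<open>x \<in> word_image u A\<close> by (blast elim: word_imageE)
  obtain b where y: "y = wval v b" "\<And>i. b i \<in> A" using \<open>y \<in> word_image v A\<close> by (blast elim: word_imageE)
  \<comment> \<open>rename the variables of \<open>u\<close> and \<open>v\<close> apart: even indices for \<open>u\<close>, odd ones for \<open>v\<close>\<close>
  define c where "c i = (if even i then a (i div 2) else b (i div 2))" for i
  have "wval u a = wval u (\<lambda>i. c (2 * i))" "wval v b = wval v (\<lambda>i. c (2 * i + 1))"
    by (simp_all add: c_def)
  then have "x + y = wval (GMul (wren (\<lambda>i. 2 * i) u) (wren (\<lambda>i. 2 * i + 1) v)) c"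
    by (simp add: wval_wren x y)
  moreover have "c i \<in> A" for i using x(2) y(2) by (simp add: c_def)
  ultimately have "x + y \<in> word_image (GMul (wren (\<lambda>i. 2 * i) u) (wren (\<lambda>i. 2 * i + 1) v)) A"
    by (metis word_imageI)
  then show "x + y \<in> (\<Union>w. word_image w A)" by blast
next
  fix x assume "x \<in> (\<Union>w. word_image w A)"
  then obtain u where "x \<in> word_image u A" by blast
  then obtain a where "x = wval u a" "\<And>i. a i \<in> A" by (blast elim: word_imageE)
  then have "- x = wval (GInv u) a" "\<And>i. a i \<in> A" by simp_all
  then have "- x \<in> word_image (GInv u) A" by (metis word_imageI)
  then show "- x \<in> (\<Union>w. word_image w A)" by blast
qed

lemma wval_in_subgroup: "is_subgroup H \<Longrightarrow> (\<And>i. a i \<in> H) \<Longrightarrow> wval w a \<in> H"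
  by (induction w) (auto simp: is_subgroup_def)

lemma gen_subgroup_eq_word_images:
  assumes "0 \<in> A"
  shows "gen_subgroup A = (\<Union>w. word_image w A)"
proof
  have "z \<in> word_image (GVar 0) A" if "z \<in> A" for z
    using that word_imageI[of "\<lambda>_. z" A "GVar 0"] by simp
  then have "A \<subseteq> (\<Union>w. word_image w A)" by blast
  then show "gen_subgroup A \<subseteq> (\<Union>w. word_image w A)"
    using is_subgroup_word_images[OF assms] unfolding gen_subgroup_def by (intro Inter_lower) simp
  show "(\<Union>w. word_image w A) \<subseteq> gen_subgroup A"
  proof
    fix z assume "z \<in> (\<Union>w. word_image w A)"
    then obtain w a where z: "z = wval w a" "\<forall>i. a i \<in> A" unfolding word_image_def by blast
    show "z \<in> gen_subgroup A" unfolding gen_subgroup_def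
    proof
      fix H assume "H \<in> {H. A \<subseteq> H \<and> is_subgroup H}"
      then show "z \<in> H" using z by (auto intro!: wval_in_subgroup)
    qed
  qed
qed

lemma gen_subgroup_insert_zero: "gen_subgroup (insert 0 A) = gen_subgroup A"
proof -
  have "{H. insert 0 A \<subseteq> H \<and> is_subgroup H} = {H. A \<subseteq> H \<and> is_subgroup H}"
    unfolding is_subgroup_def by auto
  then show ?thesis unfolding gen_subgroup_def by simp
qed

lemma vimage_gen_subgroup:
  assumes "0 \<in> A" "0 \<in> B" "\<And>w. f -` word_image w A = word_image w B"
  shows "f -` gen_subgroup A = gen_subgroup B"
  by (simp add: gen_subgroup_eq_word_images[OF assms(1)] gen_subgroup_eq_word_images[OF assms(2)] assms(3) vimage_UN)

section \<open>Truncations\<close>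

definition trunc :: "nat \<Rightarrow> (nat \<Rightarrow> 'a::zero) \<Rightarrow> nat \<Rightarrow> 'a" where
  "trunc n x = (\<lambda>i. if i < n then x i else 0)"

lemma group_hom_trunc: "group_hom (trunc n :: (nat \<Rightarrow> 'a::group_add) \<Rightarrow> _)"
  unfolding group_hom_def trunc_def by (auto simp: fun_eq_iff)

lemma continuous_on_trunc: "continuous_on UNIV (trunc n :: (nat \<Rightarrow> 'a::{topological_space,zero}) \<Rightarrow> _)"
  unfolding trunc_def
proof (intro continuous_on_coordinatewise_then_product)
  show "continuous_on UNIV (\<lambda>x::nat \<Rightarrow> 'a. if i < n then x i else 0)" for i
    by (cases "i < n") simp_all
qed

lemma LIMSEQ_if_trunc_eq:
  assumes "\<And>n. trunc n (y n) = trunc n x"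
  shows "y \<longlonglongrightarrow> x"
proof -
  have "eventually (\<lambda>n. y n j = x j) sequentially" for j
  proof (rule eventually_sequentiallyI)
    fix n assume "Suc j \<le> n"
    then show "y n j = x j" using fun_cong[OF assms[of n], of j] by (simp add: trunc_def)
  qed
  then show ?thesis by (simp add: tendsto_fun_iff tendsto_eventually)
qed

lemma mem_closed_if_trunc_mem:
  fixes C :: "(nat \<Rightarrow> 'a::{first_countable_topology,zero}) set"
  assumes "closed C" "\<And>n. trunc n x \<in> trunc n ` C"
  shows "x \<in> C"
proof -
  have "\<forall>n. \<exists>z. z \<in> C \<and> trunc n z = trunc n x" using assms(2) by (metis imageE)
  then obtain y where "\<forall>n. y n \<in> C \<and> trunc n (y n) = trunc n x" by (rule choice[THEN exE])
  then show ?thesis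
    using LIMSEQ_if_trunc_eq closed_sequentially[OF assms(1)] by blast
qed

lemma mem_word_image_if_trunc_mem:
  fixes K :: "(nat \<Rightarrow> 'a::{topological_group_add,metric_space}) set"
  assumes "compact K" "\<And>n. trunc n x \<in> word_image w (trunc n ` K)"
  shows "x \<in> word_image w K"
proof (rule mem_closed_if_trunc_mem)
  show "closed (word_image w K)" by (rule compact_imp_closed[OF compact_word_image[OF assms(1)]])
  show "trunc n x \<in> trunc n ` word_image w K" for n
    using assms(2) word_image_group_hom[OF group_hom_trunc] by blast
qed

section \<open>A countable family of compact boxes\<close>

definition compact_closures :: "'a::topological_space set set \<Rightarrow> 'a set set" where
  "compact_closures \<B> = {closure V | V. V \<in> \<B> \<and> compact (closure V)}"

definition finite_box :: "'a set list \<Rightarrow> (nat \<Rightarrow> 'a::zero) set" where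
  "finite_box vs = {y. \<forall>i. y i \<in> (if i < length vs then vs ! i else {0})}"

definition box_unions :: "'a::{topological_space,zero} set set \<Rightarrow> (nat \<Rightarrow> 'a) set set" where
  "box_unions \<B> = {\<Union>E | E. finite E \<and> E \<subseteq> finite_box ` lists (compact_closures \<B>)}"

text \<open>The finite intersections make the members containing a fixed set a directed family.\<close>

definition box_sets :: "'a::{topological_space,zero} set set \<Rightarrow> (nat \<Rightarrow> 'a) set set" where
  "box_sets \<B> = {\<Inter>D | D. finite D \<and> D \<noteq> {} \<and> D \<subseteq> box_unions \<B>}"

lemma countable_box_sets:
  assumes "countable \<B>"
  shows "countable (box_sets \<B>)"
proof -
  have "compact_closures \<B> \<subseteq> closure ` \<B>" unfolding compact_closures_def by blast
  then have "countable (finite_box ` lists (compact_closures \<B>))"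
    using assms by (meson countable_image countable_lists countable_subset)
  then have "countable (Union ` {E. finite E \<and> E \<subseteq> finite_box ` lists (compact_closures \<B>)})"
    by (rule countable_image[OF countable_Collect_finite_subset])
  moreover have "box_unions \<B> = Union ` {E. finite E \<and> E \<subseteq> finite_box ` lists (compact_closures \<B>)}"
    unfolding box_unions_def by blast
  ultimately have "countable (Inter ` {D. finite D \<and> D \<subseteq> box_unions \<B>})"
    by (intro countable_image countable_Collect_finite_subset) simp
  moreover have "box_sets \<B> \<subseteq> Inter ` {D. finite D \<and> D \<subseteq> box_unions \<B>}"
    unfolding box_sets_def by blast
  ultimately show ?thesis by (rule countable_subset[rotated])
qed

lemma compact_finite_box:
  assumes "vs \<in> lists (compact_closures \<B>)"
  shows "compact (finite_box vs)"
  unfolding finite_box_def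
proof (rule compact_Pi_UNIV)
  fix i
  have "i < length vs \<Longrightarrow> vs ! i \<in> compact_closures \<B>" using assms nth_mem by (metis in_listsD)
  then show "compact (if i < length vs then vs ! i else {0})"
    by (auto simp: compact_closures_def)
qed

lemma compact_box_sets:
  fixes \<B> :: "'a::{metric_space,zero} set set"
  assumes "B \<in> box_sets \<B>"
  shows "compact B"
proof -
  have compact_unions: "compact U" if U: "U \<in> box_unions \<B>" for U
  proof -
    obtain E where "U = \<Union>E" "finite E" "E \<subseteq> finite_box ` lists (compact_closures \<B>)"
      using U unfolding box_unions_def by blast
    then show ?thesis by (metis compact_Union compact_finite_box imageE subsetD)
  qed
  obtain D where D: "B = \<Inter>D" "finite D" "D \<noteq> {}" "D \<subseteq> box_unions \<B>"
    using assms unfolding box_sets_def by blast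
  then obtain D0 where "D0 \<in> D" by blast
  then have "B = D0 \<inter> \<Inter>D" using D by blast
  moreover have "compact D0" using compact_unions \<open>D0 \<in> D\<close> D by blast
  moreover have "closed (\<Inter>D)"
    using compact_unions D(4) by (intro closed_Inter ballI compact_imp_closed) blast
  ultimately show ?thesis by (simp add: compact_Int_closed)
qed

lemma box_sets_Int:
  assumes "B \<in> box_sets \<B>" "C \<in> box_sets \<B>"
  shows "B \<inter> C \<in> box_sets \<B>"
proof -
  obtain D E where "B = \<Inter>D" "finite D" "D \<noteq> {}" "D \<subseteq> box_unions \<B>"
    "C = \<Inter>E" "finite E" "E \<subseteq> box_unions \<B>"
    using assms unfolding box_sets_def by blast
  then have "B \<inter> C = \<Inter>(D \<union> E) \<and> finite (D \<union> E) \<and> D \<union> E \<noteq> {} \<and> D \<union> E \<subseteq> box_unions \<B>"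
    by auto
  then show ?thesis unfolding box_sets_def by (intro CollectI exI[of _ "D \<union> E"])
qed

lemma basis_compact_closure_subset:
  fixes \<B> :: "'a::metric_space set set"
  assumes "topological_basis \<B>" "locally_compact_space (euclidean :: 'a topology)"
    and "open U" "p \<in> U"
  shows "\<exists>V\<in>\<B>. p \<in> V \<and> closure V \<subseteq> U \<and> compact (closure V)"
proof -
  obtain N C where "open N" "compact C" "p \<in> N" "N \<subseteq> C"
    using assms(2) unfolding locally_compact_space_def
    by (metis compactin_euclidean_iff open_openin topspace_euclidean UNIV_I)
  then obtain e where e: "e > 0" "cball p e \<subseteq> U \<inter> N"
    using assms(3,4) open_contains_cball by (metis IntI open_Int)
  obtain V where V: "V \<in> \<B>" "p \<in> V" "V \<subseteq> ball p e"
    using topological_basisE[OF assms(1) open_ball[of p e]] e(1) by (metis centre_in_ball)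
  have "closure V \<subseteq> cball p e"
    using V(3) ball_subset_cball by (intro closure_minimal) auto
  then have "closure V \<subseteq> U" "closure V \<subseteq> C" using e(2) \<open>N \<subseteq> C\<close> by auto
  moreover have "compact (closure V)"
    using compact_Int_closed[OF \<open>compact C\<close> closed_closure, of V] \<open>closure V \<subseteq> C\<close>
    by (simp add: Int_absorb1)
  ultimately show ?thesis using V by blast
qed

lemma finite_box_neighbourhood:
  fixes \<B> :: "'a::{metric_space,zero} set set"
  assumes tb: "topological_basis \<B>" and lc: "locally_compact_space (euclidean :: 'a topology)"
    and W: "open W" "p \<in> W" and support: "\<And>i. n \<le> i \<Longrightarrow> p i = 0"
  shows "\<exists>N vs. open N \<and> p \<in> N \<and> N \<inter> {y. \<forall>i\<ge>n. y i = 0} \<subseteq> finite_box vs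
           \<and> finite_box vs \<subseteq> W \<and> vs \<in> lists (compact_closures \<B>)"
proof -
  have "openin (product_topology (\<lambda>i. euclidean) UNIV) W" using W by (simp add: open_fun_def)
  from product_topology_open_contains_basis[OF this W(2)]
  obtain X where X: "p \<in> Pi UNIV X" "\<forall>i. open (X i)" "Pi UNIV X \<subseteq> W"
    by (auto simp: PiE_UNIV_domain)
  then have "\<forall>i. \<exists>V\<in>\<B>. p i \<in> V \<and> closure V \<subseteq> X i \<and> compact (closure V)"
    using basis_compact_closure_subset[OF tb lc] by (simp add: Pi_iff)
  then obtain V where V: "\<And>i. V i \<in> \<B>" "\<And>i. p i \<in> V i" "\<And>i. closure (V i) \<subseteq> X i"
    "\<And>i. compact (closure (V i))" by metis
  define vs where "vs = map (\<lambda>i. closure (V i)) [0..<n]"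
  define N where "N = {y. \<forall>i\<in>{..<n}. y (id i) \<in> V i}"
  have "open N" unfolding N_def
    by (rule product_topology_basis') (use V(1) tb topological_basis_open in auto)
  moreover have "p \<in> N" using V unfolding N_def by auto
  moreover have "N \<inter> {y. \<forall>i\<ge>n. y i = 0} \<subseteq> finite_box vs"
    unfolding N_def finite_box_def vs_def using closure_subset by fastforce
  moreover have "finite_box vs \<subseteq> W"
  proof
    fix y assume "y \<in> finite_box vs"
    then have y: "y i \<in> (if i < n then closure (V i) else {0})" for i
      unfolding finite_box_def vs_def by (auto elim!: allE[of _ i])
    have "y i \<in> X i" for i
    proof (cases "i < n")
      case True then show ?thesis using y[of i] V(3)[of i] by auto
    next
      case False then show ?thesis using y[of i] X(1) support[of i] by (metis Pi_iff UNIV_I not_less singletonD)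
    qed
    then show "y \<in> W" using X(3) by blast
  qed
  moreover have "closure (V i) \<in> compact_closures \<B>" for i
    using V unfolding compact_closures_def by blast
  then have "vs \<in> lists (compact_closures \<B>)" unfolding vs_def by auto
  ultimately show ?thesis by blast
qed

lemma box_sets_between:
  fixes \<B> :: "'a::{metric_space,zero} set set"
  assumes tb: "topological_basis \<B>" and lc: "locally_compact_space (euclidean :: 'a topology)"
    and L: "compact L" "L \<subseteq> {y. \<forall>i\<ge>n. y i = 0}" and W: "open W" "L \<subseteq> W"
  shows "\<exists>B\<in>box_sets \<B>. L \<subseteq> B \<and> B \<subseteq> W"
proof -
  let ?Z = "{y. \<forall>i\<ge>n. y i = 0}"
  have "\<forall>p\<in>L. \<exists>N vs. open N \<and> p \<in> N \<and> N \<inter> ?Z \<subseteq> finite_box vs \<and> finite_box vs \<subseteq> W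
           \<and> vs \<in> lists (compact_closures \<B>)"
    using finite_box_neighbourhood[OF tb lc W(1)] W(2) L(2) by blast
  then obtain N where "\<forall>p\<in>L. \<exists>vs. open (N p) \<and> p \<in> N p \<and> N p \<inter> ?Z \<subseteq> finite_box vs
     \<and> finite_box vs \<subseteq> W \<and> vs \<in> lists (compact_closures \<B>)"
    by (rule bchoice[THEN exE])
  then obtain vs where Nvs: "\<forall>p\<in>L. open (N p) \<and> p \<in> N p \<and> N p \<inter> ?Z \<subseteq> finite_box (vs p)
     \<and> finite_box (vs p) \<subseteq> W \<and> vs p \<in> lists (compact_closures \<B>)"
    by (rule bchoice[THEN exE])
  obtain P where P: "P \<subseteq> L" "finite P" "L \<subseteq> (\<Union>p\<in>P. N p)"
  proof (rule compactE_image[OF L(1), of L N])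
    show "\<And>p. p \<in> L \<Longrightarrow> open (N p)" "L \<subseteq> (\<Union>p\<in>L. N p)" using Nvs by blast+
  qed
  define B where "B = (\<Union>p\<in>P. finite_box (vs p))"
  have "finite ((\<lambda>p. finite_box (vs p)) ` P)"
    "(\<lambda>p. finite_box (vs p)) ` P \<subseteq> finite_box ` lists (compact_closures \<B>)"
    using P(1,2) Nvs by auto
  then have "B \<in> box_unions \<B>" unfolding box_unions_def B_def by blast
  then have "\<Inter>{B} \<in> box_sets \<B>" unfolding box_sets_def by blast
  moreover have "L \<subseteq> B"
  proof
    fix l assume "l \<in> L"
    then obtain p where p: "p \<in> P" "l \<in> N p" using P(3) by blast
    then have "l \<in> finite_box (vs p)" using Nvs P(1) L(2) \<open>l \<in> L\<close> by blast
    then show "l \<in> B" using p unfolding B_def by blast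
  qed
  moreover have "B \<subseteq> W" using P(1) Nvs unfolding B_def by blast
  ultimately show ?thesis by auto
qed

lemma Inter_box_sets_supersets:
  fixes \<B> :: "'a::{metric_space,zero} set set"
  assumes "topological_basis \<B>" "locally_compact_space (euclidean :: 'a topology)"
    and "compact L" "L \<subseteq> {y. \<forall>i\<ge>n. y i = 0}"
  shows "\<Inter>{B \<in> box_sets \<B>. L \<subseteq> B} = L"
proof
  show "\<Inter>{B \<in> box_sets \<B>. L \<subseteq> B} \<subseteq> L"
  proof
    fix x assume x: "x \<in> \<Inter>{B \<in> box_sets \<B>. L \<subseteq> B}"
    show "x \<in> L"
    proof (rule ccontr)
      assume "x \<notin> L"
      then obtain B where "B \<in> box_sets \<B>" "L \<subseteq> B" "B \<subseteq> - {x}"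
        using box_sets_between[OF assms, of "- {x}"] by blast
      then show False using x by blast
    qed
  qed
qed blast

lemma word_image_eq_Inter_box_sets:
  fixes \<B> :: "'a::{metric_space,topological_group_add} set set"
  assumes "topological_basis \<B>" "locally_compact_space (euclidean :: 'a topology)"
    and "compact L" "L \<subseteq> {y. \<forall>i\<ge>n. y i = 0}"
  shows "word_image w L = (\<Inter>B\<in>{B \<in> box_sets \<B>. L \<subseteq> B}. word_image w B)"
proof -
  have "{B \<in> box_sets \<B>. L \<subseteq> B} \<noteq> {}"
    using box_sets_between[OF assms open_UNIV] by blast
  then have "word_image w (\<Inter>{B \<in> box_sets \<B>. L \<subseteq> B}) = (\<Inter>B\<in>{B \<in> box_sets \<B>. L \<subseteq> B}. word_image w B)"
    by (rule word_image_Inter_compact) (auto intro: compact_box_sets box_sets_Int)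
  then show ?thesis unfolding Inter_box_sets_supersets[OF assms] .
qed

section \<open>The universal compact set\<close>

definition unblock :: "(nat \<Rightarrow> nat \<Rightarrow> 'a) \<Rightarrow> nat \<Rightarrow> 'a" where
  "unblock b = case_prod b \<circ> prod_decode"

lemma unblock_prod_encode: "unblock b (prod_encode (r, m)) = b r m"
  by (simp add: unblock_def)

lemma inj_unblock: "inj unblock"
proof (rule injI)
  fix b c :: "nat \<Rightarrow> nat \<Rightarrow> 'a" assume "unblock b = unblock c"
  then have "b r m = c r m" for r m by (metis unblock_prod_encode)
  then show "b = c" by blast
qed

lemma group_hom_unblock: "group_hom (unblock :: (nat \<Rightarrow> nat \<Rightarrow> 'a::group_add) \<Rightarrow> _)"
  unfolding group_hom_def unblock_def by (auto simp: fun_eq_iff split: prod.split)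

lemma continuous_on_unblock: "continuous_on UNIV (unblock :: (nat \<Rightarrow> nat \<Rightarrow> 'a::topological_space) \<Rightarrow> _)"
proof (rule continuous_on_coordinatewise_then_product)
  fix j
  obtain r m where "prod_decode j = (r, m)" by fastforce
  then show "continuous_on UNIV (\<lambda>b :: nat \<Rightarrow> nat \<Rightarrow> 'a. unblock b j)"
    by (simp add: unblock_def continuous_on_product_then_coordinatewise[OF continuous_on_product_coordinates])
qed

definition block_trunc ::
    "(nat \<Rightarrow> nat) \<Rightarrow> (nat \<Rightarrow> (nat \<Rightarrow> 'a) set) \<Rightarrow> (nat \<Rightarrow> 'a) set \<Rightarrow> (nat \<Rightarrow> 'a::zero) \<Rightarrow> nat \<Rightarrow> nat \<Rightarrow> 'a"
  where "block_trunc nr Br K x r = (if trunc (nr r) ` K \<subseteq> Br r then trunc (nr r) x else 0)"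

lemma continuous_on_block_trunc:
  "continuous_on UNIV (block_trunc nr Br K :: (nat \<Rightarrow> 'a::{topological_space,zero}) \<Rightarrow> _)"
  unfolding block_trunc_def
proof (rule continuous_on_coordinatewise_then_product)
  show "continuous_on UNIV (\<lambda>x::nat \<Rightarrow> 'a. if trunc (nr r) ` K \<subseteq> Br r then trunc (nr r) x else 0)" for r
    by (cases "trunc (nr r) ` K \<subseteq> Br r") (simp_all add: continuous_on_trunc)
qed

lemma group_hom_block_trunc: "group_hom (block_trunc nr Br K :: (nat \<Rightarrow> 'a::group_add) \<Rightarrow> _)"
  using group_hom_trunc unfolding group_hom_def block_trunc_def by (auto simp: fun_eq_iff)

lemma vimage_block_trunc:
  fixes \<B> :: "'a::{polish_space,topological_group_add} set set"
    and Br :: "nat \<Rightarrow> (nat \<Rightarrow> 'a) set" and nr :: "nat \<Rightarrow> nat"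
  assumes tb: "topological_basis \<B>" and lc: "locally_compact_space (euclidean :: 'a topology)"
    and Br: "\<And>r. 0 \<in> Br r"
    and enum: "\<And>n B. B \<in> box_sets \<B> \<Longrightarrow> 0 \<in> B \<Longrightarrow> \<exists>r. nr r = n \<and> Br r = B"
    and K: "compact K" "0 \<in> K"
  shows "block_trunc nr Br K -` {y. \<forall>r. y r \<in> word_image w (Br r)} = word_image w K"
proof (rule set_eqI)
  fix x
  let ?S = "{r. trunc (nr r) ` K \<subseteq> Br r}"
  have "block_trunc nr Br K x \<in> {y. \<forall>r. y r \<in> word_image w (Br r)} \<longleftrightarrow>
      (\<forall>r\<in>?S. trunc (nr r) x \<in> word_image w (Br r))"
    using zero_in_word_image[OF Br] by (auto simp: block_trunc_def)
  also have "\<dots> \<longleftrightarrow> x \<in> word_image w K"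
  proof
    assume H: "\<forall>r\<in>?S. trunc (nr r) x \<in> word_image w (Br r)"
    show "x \<in> word_image w K"
    proof (rule mem_word_image_if_trunc_mem[OF K(1)])
      fix n
      have "trunc n x \<in> word_image w B" if B: "B \<in> box_sets \<B>" "trunc n ` K \<subseteq> B" for B
      proof -
        have "0 \<in> B" using B(2) K(2) group_hom_zero[OF group_hom_trunc, of n] by force
        then obtain r where "nr r = n" "Br r = B" using enum[OF B(1)] by blast
        then show ?thesis using H B(2) by blast
      qed
      moreover have "compact (trunc n ` K)"
        by (rule compact_continuous_image[OF continuous_on_subset[OF continuous_on_trunc] K(1)]) simp
      moreover have "trunc n ` K \<subseteq> {y. \<forall>i\<ge>n. y i = 0}" by (auto simp: trunc_def)
      ultimately show "trunc n x \<in> word_image w (trunc n ` K)"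
        using word_image_eq_Inter_box_sets[OF tb lc] by blast
    qed
  next
    assume "x \<in> word_image w K"
    then have "trunc (nr r) x \<in> word_image w (trunc (nr r) ` K)" for r
      by (simp add: word_image_group_hom[OF group_hom_trunc])
    then show "\<forall>r\<in>?S. trunc (nr r) x \<in> word_image w (Br r)"
      using word_image_mono by blast
  qed
  finally show "x \<in> block_trunc nr Br K -` {y. \<forall>r. y r \<in> word_image w (Br r)} \<longleftrightarrow> x \<in> word_image w K"
    by simp
qed

lemma universal_for_box_enumeration:
  fixes \<B> :: "'a::{polish_space,topological_group_add} set set"
    and Br :: "nat \<Rightarrow> (nat \<Rightarrow> 'a) set" and nr :: "nat \<Rightarrow> nat"
  assumes "topological_basis \<B>" "locally_compact_space (euclidean :: 'a topology)"
    and "\<And>r. 0 \<in> Br r"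
    and "\<And>n B. B \<in> box_sets \<B> \<Longrightarrow> 0 \<in> B \<Longrightarrow> \<exists>r. nr r = n \<and> Br r = B"
    and "compact K" "0 \<in> K"
  shows "\<exists>\<phi> :: (nat \<Rightarrow> 'a) \<Rightarrow> nat \<Rightarrow> 'a. continuous_on UNIV \<phi> \<and> group_hom \<phi> \<and>
    (\<forall>w. \<phi> -` word_image w (unblock ` {b. \<forall>r. b r \<in> Br r}) = word_image w K)"
proof (intro exI[of _ "unblock \<circ> block_trunc nr Br K"] conjI allI)
  show "continuous_on UNIV (unblock \<circ> block_trunc nr Br K)"
    using continuous_on_block_trunc continuous_on_unblock
    by (rule continuous_on_compose[OF _ continuous_on_subset]) simp
  show "group_hom (unblock \<circ> block_trunc nr Br K)"
    using group_hom_unblock group_hom_block_trunc by (rule group_hom_comp)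
  fix w
  show "(unblock \<circ> block_trunc nr Br K) -` word_image w (unblock ` {b. \<forall>r. b r \<in> Br r}) = word_image w K"
    unfolding word_image_group_hom[OF group_hom_unblock] word_image_Pi vimage_comp[symmetric]
      inj_vimage_image_eq[OF inj_unblock] by (rule vimage_block_trunc[OF assms])
qed

lemma universal_compact_set:
  assumes lc: "locally_compact_space (euclidean :: 'a::{polish_space,topological_group_add} topology)"
  shows "\<exists>K0 :: (nat \<Rightarrow> 'a) set. compact K0 \<and> 0 \<in> K0 \<and>
    (\<forall>K. compact K \<and> 0 \<in> K \<longrightarrow> (\<exists>\<phi> :: (nat \<Rightarrow> 'a) \<Rightarrow> nat \<Rightarrow> 'a.
       continuous_on UNIV \<phi> \<and> group_hom \<phi> \<and> (\<forall>w. \<phi> -` word_image w K0 = word_image w K)))"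
proof -
  obtain \<B> :: "'a set set" where \<B>: "countable \<B>" "topological_basis \<B>"
    using ex_countable_basis by blast
  define P where "P = (UNIV :: nat set) \<times> {B \<in> box_sets \<B>. 0 \<in> B}"
  have "countable P" unfolding P_def using countable_box_sets[OF \<B>(1)] by auto
  obtain B where "B \<in> box_sets \<B>" "{0} \<subseteq> B"
    using box_sets_between[OF \<B>(2) lc, of "{0}" 0 UNIV] by auto
  then have "P \<noteq> {}" unfolding P_def by blast
  define nr where "nr r = fst (from_nat_into P r)" for r
  define Br where "Br r = snd (from_nat_into P r)" for r
  have Br: "Br r \<in> box_sets \<B>" "0 \<in> Br r" for r
    using from_nat_into[OF \<open>P \<noteq> {}\<close>, of r] unfolding Br_def P_def by auto
  have enum: "\<exists>r. nr r = n \<and> Br r = B" if "B \<in> box_sets \<B>" "0 \<in> B" for n B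
  proof -
    have "(n, B) \<in> P" using that unfolding P_def by simp
    then obtain r where "from_nat_into P r = (n, B)" using from_nat_into_surj[OF \<open>countable P\<close>] by blast
    then have "nr r = n" "Br r = B" unfolding nr_def Br_def by simp_all
    then show ?thesis by blast
  qed
  define K0 where "K0 = unblock ` {b. \<forall>r. b r \<in> Br r}"
  show ?thesis
  proof (intro exI[of _ K0] conjI allI impI)
    have "compact {b. \<forall>r. b r \<in> Br r}" using Br(1) compact_box_sets by (intro compact_Pi_UNIV) blast
    then show "compact K0" unfolding K0_def
      by (rule compact_continuous_image[OF continuous_on_subset[OF continuous_on_unblock subset_UNIV]])
    have "(0 :: nat \<Rightarrow> nat \<Rightarrow> 'a) \<in> {b. \<forall>r. b r \<in> Br r}" using Br(2) by simp
    then show "0 \<in> K0" unfolding K0_def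
      by (rule image_eqI[rotated]) (simp add: group_hom_zero[OF group_hom_unblock])
    show "\<exists>\<phi> :: (nat \<Rightarrow> 'a) \<Rightarrow> nat \<Rightarrow> 'a.
        continuous_on UNIV \<phi> \<and> group_hom \<phi> \<and> (\<forall>w. \<phi> -` word_image w K0 = word_image w K)"
      if K: "compact K \<and> 0 \<in> K" for K
      using K unfolding K0_def by (intro universal_for_box_enumeration[OF \<B>(2) lc Br(2) enum]) simp_all
  qed
qed

theorem mainTheorem19:
  fixes G_witness :: "'a::{topological_group_add, polish_space}"
  assumes "locally_compact_space (euclidean :: 'a topology)"
  shows "\<exists>K0 :: (nat \<Rightarrow> 'a) set. compact K0 \<and> 0 \<in> K0 \<and>
    (\<forall>K :: (nat \<Rightarrow> 'a) set. compact K \<and> 0 \<in> K \<longrightarrow>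
       (\<exists>\<phi> :: (nat \<Rightarrow> 'a) \<Rightarrow> (nat \<Rightarrow> 'a). continuous_on UNIV \<phi> \<and> group_hom \<phi> \<and>
          (\<forall>w. \<phi> -` word_image w K0 = word_image w K))) \<and>
    (\<forall>K :: (nat \<Rightarrow> 'a) set. compact K \<longrightarrow>
       (\<exists>\<psi> :: (nat \<Rightarrow> 'a) \<Rightarrow> (nat \<Rightarrow> 'a). continuous_on UNIV \<psi> \<and> group_hom \<psi> \<and>
          \<psi> -` gen_subgroup K0 = gen_subgroup K))"
proof -
  obtain K0 :: "(nat \<Rightarrow> 'a) set" where K0: "compact K0" "0 \<in> K0"
    and universal: "\<forall>K. compact K \<and> 0 \<in> K \<longrightarrow> (\<exists>\<phi> :: (nat \<Rightarrow> 'a) \<Rightarrow> nat \<Rightarrow> 'a.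
       continuous_on UNIV \<phi> \<and> group_hom \<phi> \<and> (\<forall>w. \<phi> -` word_image w K0 = word_image w K))"
    using universal_compact_set[OF assms] by (elim exE conjE)
  have "\<exists>\<psi> :: (nat \<Rightarrow> 'a) \<Rightarrow> nat \<Rightarrow> 'a. continuous_on UNIV \<psi> \<and> group_hom \<psi> \<and>
          \<psi> -` gen_subgroup K0 = gen_subgroup K" if "compact K" for K :: "(nat \<Rightarrow> 'a) set"
  proof -
    obtain \<phi> :: "(nat \<Rightarrow> 'a) \<Rightarrow> nat \<Rightarrow> 'a" where \<phi>: "continuous_on UNIV \<phi>" "group_hom \<phi>"
      and words: "\<forall>w. \<phi> -` word_image w K0 = word_image w (insert 0 K)"
      using universal[rule_format, of "insert 0 K"] \<open>compact K\<close> by auto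
    have "\<phi> -` gen_subgroup K0 = gen_subgroup (insert 0 K)"
      using words by (intro vimage_gen_subgroup[OF K0(2) insertI1]) blast
    then show ?thesis using \<phi> by (intro exI[of _ \<phi>]) (simp add: gen_subgroup_insert_zero)
  qed
  then show ?thesis using K0 universal by (intro exI[of _ K0]) simp
qed

end
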